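(* Let $F$ be a distribution on $[0,\infty)$ (the particle lifetime distribution of a sub-critical age-dependent branching process), let $A=h'(1)\in(0,1)$ where $h$ is the particle production generating function, and let $$A(t)=\mathbf E Z(t)=(1-A)\sum_{n=1}^\infty A^{n-1}\big(1-F^{*n}(t)\big),\quad t\ge0,$$ where $Z(t)$ is the number of particles at time $t$. Let $0<T\le\infty$, $\Delta=(0,T]$ (with the convention $A(t+T)=0$ if $T=\infty$), and assume $F\in\mathcal L_\Delta$. Then $F\in\mathcal S_\Delta$ if and only if $A(t)-A(t+T)\sim F(t+\Delta)/(1-A)$ as $t\to\infty$.
   Context: $F^{*n}(t)=F^{*n}(-\infty,t]$ is the $n$-fold convolution distribution function. For $0<T\le\infty$, $t+\Delta=(t,t+T]$. $F\in\mathcal L_\Delta$ means $F(x+\Delta)>0$ for all large $x$ and $F(x+s+\Delta)/F(x+\Delta)\to1$ as $x\to\infty$ uniformly in $s\in[0,1]$. A distribution $F$ on $[0,\infty)$ with unbounded support is in $\mathcal S_\Delta$ if $F\in\mathcal L_\Delta$ and $(F*F)(x+\Delta)\sim2F(x+\Delta)$. $a\sim b$ means $a/b\to1$. *)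

theory Defs
  imports "HOL-Probability.Probability" "HOL-Probability.Convolution" "HOL-Library.Landau_Symbols"
begin

primrec conv_pow :: "real measure \<Rightarrow> nat \<Rightarrow> real measure" where
  "conv_pow F 0 = return borel 0"
| "conv_pow F (Suc n) = convolution F (conv_pow F n)"

definition distr_nonneg :: "real measure \<Rightarrow> bool" where
  "distr_nonneg F \<longleftrightarrow> prob_space F \<and> sets F = sets borel \<and> measure F {..<0} = 0"

definition shift_int :: "real \<Rightarrow> ereal \<Rightarrow> real set" where
  "shift_int x T = {y. x < y \<and> ereal y \<le> ereal x + T}"

definition mDelta :: "real measure \<Rightarrow> ereal \<Rightarrow> real \<Rightarrow> real" where
  "mDelta F T x = measure F (shift_int x T)"

definition class_L :: "ereal \<Rightarrow> real measure \<Rightarrow> bool" where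
  "class_L T F \<longleftrightarrow>
     (eventually (\<lambda>x. mDelta F T x > 0) at_top) \<and>
     (\<forall>\<epsilon>>0. eventually (\<lambda>x. \<forall>s\<in>{0..1}.
         \<bar>mDelta F T (x + s) / mDelta F T x - 1\<bar> < \<epsilon>) at_top)"

definition class_S :: "ereal \<Rightarrow> real measure \<Rightarrow> bool" where
  "class_S T F \<longleftrightarrow> (\<forall>x. measure F {x<..} > 0) \<and> class_L T F \<and>
     ((\<lambda>x. mDelta (convolution F F) T x) \<sim>[at_top] (\<lambda>x. 2 * mDelta F T x))"

definition mean_fun :: "real measure \<Rightarrow> real \<Rightarrow> real \<Rightarrow> real" where
  "mean_fun F a t = (1 - a) * (\<Sum>n. a ^ n * (1 - measure (conv_pow F (Suc n)) {..t}))"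

definition mean_diff :: "real measure \<Rightarrow> real \<Rightarrow> ereal \<Rightarrow> real \<Rightarrow> real" where
  "mean_diff F a T t = (if T = \<infinity> then mean_fun F a t
                        else mean_fun F a t - mean_fun F a (t + real_of_ereal T))"

end

theory Submission
  imports Defs
begin

text \<open>Let G be the law of the sum of N + 1 independent F-distributed lifetimes, where
  P(N = n) = (1 - a) a^n. Then A(t) is the tail of G, so A(t) - A(t + T) = G(t + \<Delta>), and G
  satisfies the renewal equation G = (1 - a) F + a F * G.

  Long-tailedness alone gives F^{*k}(t + \<Delta>) \<ge> (k - \<epsilon>) F(t + \<Delta>) for large t, hence
  G(t + \<Delta>) is asymptotically at least \<Sum> (1 - a) a^n (n + 1) F(t + \<Delta>) = F(t + \<Delta>) / (1 - a).
  Any excess of (F * F)(t + \<Delta>) over 2 F(t + \<Delta>) enters this sum through the term n = 1,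
  which proves the converse implication.

  For subexponential F, splitting F * G according to which summand is large shows that a bound
  G \<le> B F on [x, t] yields G(t + \<Delta>) \<le> (1 + \<eta> + a B) F(t + \<Delta>). A contraction argument for
  sup G/F over [x, t] first makes G/F bounded; iterating B \<mapsto> 1 + \<eta> + a B then brings the bound
  down to 1 / (1 - a).\<close>

section \<open>Distributions on [0, \<infinity>) and their convolutions\<close>

lemma shift_int_eq:
  assumes "0 < T"
  shows "shift_int x T = (if T = \<infinity> then {x<..} else {x<..x + real_of_ereal T})"
  using assms by (cases T) (auto simp: shift_int_def)

lemma shift_int_in_borel [simp]: "0 < T \<Longrightarrow> shift_int x T \<in> sets borel"
  by (simp add: shift_int_eq)

lemma add_mem_shift_int_iff: "0 < T \<Longrightarrow> z + y \<in> shift_int x T \<longleftrightarrow> y \<in> shift_int (x - z) T"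
  by (auto simp: shift_int_eq)

lemma less_of_mem_shift_int: "y \<in> shift_int x T \<Longrightarrow> x < y"
  by (simp add: shift_int_def)

lemma mDelta_nonneg: "0 \<le> mDelta Q T x"
  by (simp add: mDelta_def)

lemma mDelta_le_1: "prob_space Q \<Longrightarrow> mDelta Q T x \<le> 1"
  unfolding mDelta_def by (rule prob_space.prob_le_1)

lemma distr_nonnegD:
  assumes "distr_nonneg Q"
  shows "prob_space Q" "finite_measure Q" "sets Q = sets borel" "space Q = UNIV" "AE x in Q. 0 \<le> x"
proof -
  show "prob_space Q" and S: "sets Q = sets borel" using assms by (auto simp: distr_nonneg_def)
  then interpret prob_space Q by simp
  show "finite_measure Q" by unfold_locales
  show "space Q = UNIV" using S by (simp add: sets_eq_imp_space_eq)
  have "{..<0::real} \<in> null_sets Q"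
    using assms S by (auto simp: distr_nonneg_def emeasure_eq_measure null_sets_def)
  then show "AE x in Q. 0 \<le> x"
    by (rule AE_I') auto
qed

lemma distr_nonneg_eventually_measure_lessThan_ge:
  assumes "distr_nonneg Q" "0 < e"
  shows "eventually (\<lambda>x. 1 - e \<le> measure Q {..<x}) at_top"
proof -
  interpret real_distribution Q
    using distr_nonnegD[OF assms(1)] by (simp add: real_distribution_def real_distribution_axioms_def)
  have "eventually (\<lambda>x. cdf Q x > 1 - e) at_top"
    using cdf_lim_at_top_prob assms(2) by (intro order_tendstoD(1)) auto
  then obtain N where N: "cdf Q N > 1 - e"
    by (auto simp: eventually_at_top_linorder)
  have "cdf Q N \<le> measure Q {..<x}" if "N < x" for x
    unfolding cdf_def using that by (intro finite_measure_mono) auto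
  then show ?thesis
    unfolding eventually_at_top_dense using N by (meson less_imp_le order.strict_trans2)
qed

lemma measure_pair_measure_eq_integral:
  assumes "finite_measure P" "finite_measure Q" and A: "A \<in> sets (P \<Otimes>\<^sub>M Q)"
  shows "integrable P (\<lambda>x. measure Q (Pair x -` A))"
    and "measure (P \<Otimes>\<^sub>M Q) A = (\<integral>x. measure Q (Pair x -` A) \<partial>P)"
proof -
  interpret P: finite_measure P by fact
  interpret Q: finite_measure Q by fact
  have m: "(\<lambda>x. measure Q (Pair x -` A)) \<in> borel_measurable P"
    unfolding measure_def by (intro borel_measurable_enn2real Q.measurable_emeasure_Pair A)
  show i: "integrable P (\<lambda>x. measure Q (Pair x -` A))"
    by (intro P.integrable_const_bound[where B="measure Q (space Q)"] m) (auto intro: Q.bounded_measure)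
  have "emeasure (P \<Otimes>\<^sub>M Q) A = (\<integral>\<^sup>+x. ennreal (measure Q (Pair x -` A)) \<partial>P)"
    using Q.emeasure_pair_measure_alt[OF A] by (simp add: Q.emeasure_eq_measure)
  also have "\<dots> = ennreal (\<integral>x. measure Q (Pair x -` A) \<partial>P)"
    by (rule nn_integral_eq_integral[OF i]) simp
  finally show "measure (P \<Otimes>\<^sub>M Q) A = (\<integral>x. measure Q (Pair x -` A) \<partial>P)"
    unfolding measure_def by simp
qed

lemma measure_pair_measure_eq_integral_swap:
  assumes "finite_measure P" "finite_measure Q" and A: "A \<in> sets (P \<Otimes>\<^sub>M Q)"
  shows "integrable Q (\<lambda>y. measure P ((\<lambda>x. (x, y)) -` A))"
    and "measure (P \<Otimes>\<^sub>M Q) A = (\<integral>y. measure P ((\<lambda>x. (x, y)) -` A) \<partial>Q)"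
proof -
  interpret P: finite_measure P by fact
  interpret Q: finite_measure Q by fact
  interpret PQ: pair_sigma_finite P Q ..
  let ?A = "(\<lambda>(x, y). (y, x)) -` A \<inter> space (Q \<Otimes>\<^sub>M P)"
  have A': "?A \<in> sets (Q \<Otimes>\<^sub>M P)"
    by (rule measurable_sets[OF measurable_pair_swap' A])
  have eq: "Pair y -` ?A = (\<lambda>x. (x, y)) -` A" for y
    using sets.sets_into_space[OF A] by (auto simp: space_pair_measure)
  have "measure (P \<Otimes>\<^sub>M Q) A = measure (Q \<Otimes>\<^sub>M P) ?A"
    by (subst PQ.distr_pair_swap) (simp add: measure_distr[OF measurable_pair_swap' A])
  then show "measure (P \<Otimes>\<^sub>M Q) A = (\<integral>y. measure P ((\<lambda>x. (x, y)) -` A) \<partial>Q)"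
    using measure_pair_measure_eq_integral(2)[OF assms(2,1) A'] unfolding eq by simp
  show "integrable Q (\<lambda>y. measure P ((\<lambda>x. (x, y)) -` A))"
    using measure_pair_measure_eq_integral(1)[OF assms(2,1) A'] unfolding eq by simp
qed

lemma sum_region_in_sets:
  fixes P Q :: "real measure"
  assumes "sets P = sets borel" "sets Q = sets borel"
    and "B \<in> sets borel" "X \<in> sets borel" "Y \<in> sets borel"
  shows "{p. fst p + snd p \<in> B \<and> fst p \<in> X \<and> snd p \<in> Y} \<in> sets (P \<Otimes>\<^sub>M Q)"
proof -
  have "(\<lambda>(x, y). x + y) \<in> measurable (P \<Otimes>\<^sub>M Q) (borel :: real measure)"
    unfolding measurable_cong_sets[OF sets_pair_measure_cong[OF assms(1,2)] refl] by measurable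
  from measurable_sets[OF this assms(3)]
  have "{p. fst p + snd p \<in> B} \<in> sets (P \<Otimes>\<^sub>M Q)"
    using assms(1,2) by (simp add: space_pair_measure sets_eq_imp_space_eq case_prod_beta vimage_def)
  moreover have "X \<times> Y \<in> sets (P \<Otimes>\<^sub>M Q)"
    using assms by (intro pair_measureI) auto
  moreover have "{p. fst p + snd p \<in> B \<and> fst p \<in> X \<and> snd p \<in> Y} = {p. fst p + snd p \<in> B} \<inter> X \<times> Y"
    by auto
  ultimately show ?thesis by auto
qed

lemma measure_convolution_eq_pair:
  fixes P Q :: "real measure"
  assumes "sets P = sets borel" "sets Q = sets borel" "B \<in> sets borel"
  shows "measure (P \<star> Q) B = measure (P \<Otimes>\<^sub>M Q) {p. fst p + snd p \<in> B}"
proof -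
  have m: "(\<lambda>(x, y). x + y) \<in> measurable (P \<Otimes>\<^sub>M Q) (borel :: real measure)"
    unfolding measurable_cong_sets[OF sets_pair_measure_cong[OF assms(1,2)] refl] by measurable
  have "(\<lambda>(x, y). x + y) -` B \<inter> space (P \<Otimes>\<^sub>M Q) = {p. fst p + snd p \<in> B}"
    using assms(1,2) by (auto simp: space_pair_measure sets_eq_imp_space_eq)
  then show ?thesis
    unfolding convolution_def using measure_distr[OF m assms(3)] by simp
qed

lemma measure_sum_region_fst:
  fixes P Q :: "real measure"
  assumes "finite_measure P" "finite_measure Q" "sets P = sets borel" "sets Q = sets borel"
    and "B \<in> sets borel" "X \<in> sets borel"
  shows "integrable P (\<lambda>x. indicator X x * measure Q {y. x + y \<in> B})"
    and "measure (P \<Otimes>\<^sub>M Q) {p. fst p + snd p \<in> B \<and> fst p \<in> X}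
           = (\<integral>x. indicator X x * measure Q {y. x + y \<in> B} \<partial>P)"
proof -
  have A: "{p. fst p + snd p \<in> B \<and> fst p \<in> X} \<in> sets (P \<Otimes>\<^sub>M Q)"
    using sum_region_in_sets[OF assms(3-6), of UNIV] by simp
  have "measure Q (Pair x -` {p. fst p + snd p \<in> B \<and> fst p \<in> X})
      = indicator X x * measure Q {y. x + y \<in> B}" for x
    by (simp add: indicator_def vimage_def)
  then show "integrable P (\<lambda>x. indicator X x * measure Q {y. x + y \<in> B})"
    and "measure (P \<Otimes>\<^sub>M Q) {p. fst p + snd p \<in> B \<and> fst p \<in> X}
           = (\<integral>x. indicator X x * measure Q {y. x + y \<in> B} \<partial>P)"
    using measure_pair_measure_eq_integral[OF assms(1,2) A] by simp_all
qed

lemma measure_sum_region_snd: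
  fixes P Q :: "real measure"
  assumes "finite_measure P" "finite_measure Q" "sets P = sets borel" "sets Q = sets borel"
    and "B \<in> sets borel" "Y \<in> sets borel"
  shows "measure (P \<Otimes>\<^sub>M Q) {p. fst p + snd p \<in> B \<and> snd p \<in> Y}
           = (\<integral>y. indicator Y y * measure P {x. x + y \<in> B} \<partial>Q)"
proof -
  have A: "{p. fst p + snd p \<in> B \<and> snd p \<in> Y} \<in> sets (P \<Otimes>\<^sub>M Q)"
    using sum_region_in_sets[OF assms(3-5), of UNIV Y] assms(6) by simp
  have "measure P ((\<lambda>x. (x, y)) -` {p. fst p + snd p \<in> B \<and> snd p \<in> Y})
      = indicator Y y * measure P {x. x + y \<in> B}" for y
    by (simp add: indicator_def vimage_def)
  then show ?thesis
    using measure_pair_measure_eq_integral_swap(2)[OF assms(1,2) A] by simp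
qed

lemma distr_nonneg_convolution:
  assumes P: "distr_nonneg P" and Q: "distr_nonneg Q"
  shows "distr_nonneg (P \<star> Q)"
proof -
  note p = distr_nonnegD[OF P] and q = distr_nonnegD[OF Q]
  interpret pp: pair_prob_space P Q
    using p(1) q(1) by (simp add: pair_prob_space_def pair_sigma_finite_def prob_space_imp_sigma_finite)
  have m: "(\<lambda>(x, y). x + y) \<in> measurable (P \<Otimes>\<^sub>M Q) (borel :: real measure)"
    unfolding measurable_cong_sets[OF sets_pair_measure_cong[OF p(3) q(3)] refl] by measurable
  have "AE x in P. indicator UNIV x * measure Q {y. x + y \<in> {..<0}} = 0"
    using p(5)
  proof eventually_elim
    case (elim x)
    have "measure Q {y. x + y \<in> {..<0}} \<le> measure Q {..<0}"
      using elim q(3) by (intro finite_measure.finite_measure_mono[OF q(2)]) auto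
    then have "measure Q {y. x + y \<in> {..<0}} \<le> 0"
      using Q by (simp add: distr_nonneg_def)
    then show ?case
      by (simp add: order_antisym)
  qed
  then have "measure (P \<star> Q) {..<0} = 0"
    using measure_convolution_eq_pair[OF p(3) q(3)] measure_sum_region_fst(2)[OF p(2) q(2) p(3) q(3), of "{..<0}" UNIV]
    by (simp add: integral_eq_zero_AE)
  moreover have "prob_space (P \<star> Q)"
    unfolding convolution_def by (rule pp.prob_space_distr[OF m])
  ultimately show ?thesis by (simp add: distr_nonneg_def)
qed

lemma distr_nonneg_return_0: "distr_nonneg (return borel (0::real))"
  by (simp add: distr_nonneg_def prob_space_return measure_return)

lemma distr_nonneg_conv_pow: "distr_nonneg F \<Longrightarrow> distr_nonneg (conv_pow F n)"
  by (induction n) (auto intro: distr_nonneg_convolution distr_nonneg_return_0)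

lemma measure_shift_region_fst:
  assumes P: "distr_nonneg P" and Q: "distr_nonneg Q" and T: "0 < T" and X: "X \<in> sets borel"
  shows "integrable P (\<lambda>x. indicator X x * mDelta Q T (t - x))"
    and "measure (P \<Otimes>\<^sub>M Q) {p. fst p + snd p \<in> shift_int t T \<and> fst p \<in> X}
           = (\<integral>x. indicator X x * mDelta Q T (t - x) \<partial>P)"
  using measure_sum_region_fst[OF distr_nonnegD(2)[OF P] distr_nonnegD(2)[OF Q]
      distr_nonnegD(3)[OF P] distr_nonnegD(3)[OF Q] shift_int_in_borel[OF T] X, of t]
  by (simp_all add: add_mem_shift_int_iff[OF T] mDelta_def)

lemma measure_shift_region_snd:
  assumes P: "distr_nonneg P" and Q: "distr_nonneg Q" and T: "0 < T" and Y: "Y \<in> sets borel"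
  shows "measure (P \<Otimes>\<^sub>M Q) {p. fst p + snd p \<in> shift_int t T \<and> snd p \<in> Y}
           = (\<integral>y. indicator Y y * mDelta P T (t - y) \<partial>Q)"
  using measure_sum_region_snd[OF distr_nonnegD(2)[OF P] distr_nonnegD(2)[OF Q]
      distr_nonnegD(3)[OF P] distr_nonnegD(3)[OF Q] shift_int_in_borel[OF T] Y, of t]
  by (simp add: add_mem_shift_int_iff[OF T] add.commute mDelta_def)

lemma mDelta_convolution_eq_pair:
  assumes "distr_nonneg P" "distr_nonneg Q" "0 < T"
  shows "mDelta (P \<star> Q) T t = measure (P \<Otimes>\<^sub>M Q) {p. fst p + snd p \<in> shift_int t T}"
  unfolding mDelta_def
  by (rule measure_convolution_eq_pair) (use distr_nonnegD(3) assms in auto)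

lemma mDelta_convolution:
  assumes "distr_nonneg P" "distr_nonneg Q" "0 < T"
  shows "integrable P (\<lambda>x. mDelta Q T (t - x))"
    and "mDelta (P \<star> Q) T t = (\<integral>x. mDelta Q T (t - x) \<partial>P)"
  using measure_shift_region_fst[OF assms, of UNIV t] mDelta_convolution_eq_pair[OF assms, of t]
  by simp_all

declare conv_pow.simps [simp del]

lemma mDelta_conv_pow_1:
  assumes F: "distr_nonneg F" and T: "0 < T"
  shows "mDelta (conv_pow F (Suc 0)) T t = mDelta F T t"
proof -
  have "mDelta (return borel 0) T (t - x) = indicator (shift_int t T) x" for x
    using add_mem_shift_int_iff[OF T, of x 0 t] T by (simp add: mDelta_def measure_return indicator_def)
  then have "mDelta (conv_pow F (Suc 0)) T t = (\<integral>x. indicator (shift_int t T) x \<partial>F)"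
    using mDelta_convolution(2)[OF F distr_nonneg_return_0 T] by (simp add: conv_pow.simps)
  then show ?thesis
    using distr_nonnegD[OF F] by (simp add: mDelta_def)
qed

lemma mDelta_conv_pow_2:
  assumes F: "distr_nonneg F" and T: "0 < T"
  shows "mDelta (conv_pow F 2) T t = mDelta (F \<star> F) T t"
proof -
  have "mDelta (conv_pow F 2) T t = (\<integral>x. mDelta (conv_pow F (Suc 0)) T (t - x) \<partial>F)"
    unfolding numeral_2_eq_2 conv_pow.simps(2)[of F "Suc 0"]
    by (rule mDelta_convolution(2)[OF F distr_nonneg_conv_pow[OF F] T])
  then show ?thesis
    using mDelta_convolution(2)[OF F F T] by (simp add: mDelta_conv_pow_1[OF F T])
qed

lemma integral_indicator_mult_ge:
  fixes g :: "'a \<Rightarrow> real"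
  assumes "finite_measure M" "X \<in> sets M" "integrable M (\<lambda>x. indicator X x * g x)"
    and "AE x in M. x \<in> X \<longrightarrow> c \<le> g x"
  shows "c * measure M X \<le> (\<integral>x. indicator X x * g x \<partial>M)"
proof -
  have "c * measure M X = (\<integral>x. indicator X x * c \<partial>M)"
    using assms(2) by (simp add: Int_absorb2 sets.sets_into_space)
  also have "\<dots> \<le> (\<integral>x. indicator X x * g x \<partial>M)"
  proof (rule integral_mono_AE)
    show "integrable M (\<lambda>x. indicator X x * c)"
      using assms(2) finite_measure.emeasure_finite[OF assms(1), of X]
      by (intro integrable_mult_left integrable_real_indicator) (simp_all add: less_top)
    show "AE x in M. indicator X x * c \<le> indicator X x * g x"
      using assms(4) by eventually_elim (simp add: indicator_def)
  qed (rule assms(3))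
  finally show ?thesis .
qed

lemma integral_indicator_mult_le:
  fixes g :: "'a \<Rightarrow> real"
  assumes "finite_measure M" "X \<in> sets M" "integrable M (\<lambda>x. indicator X x * g x)"
    and "AE x in M. x \<in> X \<longrightarrow> g x \<le> c"
  shows "(\<integral>x. indicator X x * g x \<partial>M) \<le> c * measure M X"
  using integral_indicator_mult_ge[of M X "\<lambda>x. - g x" "- c"] assms by auto

lemma measure_sum_regions_le_mDelta_convolution:
  assumes P: "distr_nonneg P" and Q: "distr_nonneg Q" and T: "0 < T"
    and X: "X \<in> sets borel" and Y: "Y \<in> sets borel"
    and disjoint: "\<And>x y. x + y \<in> shift_int t T \<Longrightarrow> x \<in> X \<Longrightarrow> y \<in> Y \<Longrightarrow> False"
  shows "measure (P \<Otimes>\<^sub>M Q) {q. fst q + snd q \<in> shift_int t T \<and> fst q \<in> X}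
           + measure (P \<Otimes>\<^sub>M Q) {q. fst q + snd q \<in> shift_int t T \<and> snd q \<in> Y}
         \<le> mDelta (P \<star> Q) T t"
proof -
  note p = distr_nonnegD[OF P] and q = distr_nonnegD[OF Q]
  interpret PQ: finite_measure "P \<Otimes>\<^sub>M Q" by (rule finite_measure_pair_measure[OF q(2) p(2)])
  define S where "S = {q. fst q + snd q \<in> shift_int t T}"
  define A1 where "A1 = {q. fst q + snd q \<in> shift_int t T \<and> fst q \<in> X}"
  define A2 where "A2 = {q. fst q + snd q \<in> shift_int t T \<and> snd q \<in> Y}"
  note region = sum_region_in_sets[OF p(3) q(3) shift_int_in_borel[OF T]]
  have sets: "S \<in> sets (P \<Otimes>\<^sub>M Q)" "A1 \<in> sets (P \<Otimes>\<^sub>M Q)" "A2 \<in> sets (P \<Otimes>\<^sub>M Q)"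
    using region[where X=UNIV and Y=UNIV] region[OF X, where Y=UNIV] region[OF _ Y, where X=UNIV]
    by (simp_all add: S_def A1_def A2_def)
  have "A1 \<inter> A2 = {}"
    using disjoint by (auto simp: A1_def A2_def)
  then have "measure (P \<Otimes>\<^sub>M Q) A1 + measure (P \<Otimes>\<^sub>M Q) A2 \<le> measure (P \<Otimes>\<^sub>M Q) S"
    using sets PQ.finite_measure_Union[of A1 A2] PQ.finite_measure_mono[of "A1 \<union> A2" S]
    by (auto simp: S_def A1_def A2_def)
  then show ?thesis
    using mDelta_convolution_eq_pair[OF P Q T, of t] by (simp add: S_def A1_def A2_def)
qed

text \<open>The two regions where one of the summands is below M are disjoint once t \<ge> 2M.\<close>
lemma mDelta_convolution_ge:
  assumes P: "distr_nonneg P" and Q: "distr_nonneg Q" and T: "0 < T" and M: "2 * M \<le> t"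
    and P_near: "\<And>z. 0 \<le> z \<Longrightarrow> z < M \<Longrightarrow> p \<le> mDelta P T (t - z)"
    and Q_near: "\<And>z. 0 \<le> z \<Longrightarrow> z < M \<Longrightarrow> q \<le> mDelta Q T (t - z)"
  shows "p * measure Q {..<M} + q * measure P {..<M} \<le> mDelta (P \<star> Q) T t"
proof -
  note p = distr_nonnegD[OF P] and q = distr_nonnegD[OF Q]
  have borel: "{..<M} \<in> sets borel" by simp
  have "p * measure Q {..<M}
      \<le> measure (P \<Otimes>\<^sub>M Q) {q. fst q + snd q \<in> shift_int t T \<and> snd q \<in> {..<M}}"
    unfolding measure_shift_region_snd[OF P Q T borel]
    using q(5) P_near q(3) measure_shift_region_fst(1)[OF Q P T borel]
    by (intro integral_indicator_mult_ge[OF q(2)]) (auto elim: AE_mp)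
  moreover have "q * measure P {..<M}
      \<le> measure (P \<Otimes>\<^sub>M Q) {q. fst q + snd q \<in> shift_int t T \<and> fst q \<in> {..<M}}"
    unfolding measure_shift_region_fst(2)[OF P Q T borel]
    using p(5) Q_near p(3) measure_shift_region_fst(1)[OF P Q T borel]
    by (intro integral_indicator_mult_ge[OF p(2)]) (auto elim: AE_mp)
  moreover have "measure (P \<Otimes>\<^sub>M Q) {q. fst q + snd q \<in> shift_int t T \<and> fst q \<in> {..<M}}
      + measure (P \<Otimes>\<^sub>M Q) {q. fst q + snd q \<in> shift_int t T \<and> snd q \<in> {..<M}}
      \<le> mDelta (P \<star> Q) T t"
    using M by (intro measure_sum_regions_le_mDelta_convolution[OF P Q T borel borel])
      (auto dest!: less_of_mem_shift_int)
  ultimately show ?thesis by linarith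
qed

lemma measure_sum_region_fst_dominated:
  assumes P: "distr_nonneg P" and Q: "distr_nonneg Q" and T: "0 < T"
    and Q_le: "\<And>u. x \<le> u \<Longrightarrow> u \<le> t \<Longrightarrow> mDelta Q T u \<le> B * mDelta P T u"
  shows "measure (P \<Otimes>\<^sub>M Q) {q. fst q + snd q \<in> shift_int t T \<and> fst q \<in> {..t - x}}
           \<le> B * measure (P \<Otimes>\<^sub>M P) {q. fst q + snd q \<in> shift_int t T \<and> fst q \<in> {..t - x}}"
proof -
  have borel: "{..t - x} \<in> sets borel" by simp
  have "(\<integral>y. indicator {..t - x} y * mDelta Q T (t - y) \<partial>P)
      \<le> (\<integral>y. B * (indicator {..t - x} y * mDelta P T (t - y)) \<partial>P)"
  proof (rule integral_mono_AE)
    show "AE y in P. indicator {..t - x} y * mDelta Q T (t - y)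
        \<le> B * (indicator {..t - x} y * mDelta P T (t - y))"
      using distr_nonnegD(5)[OF P] by eventually_elim (use Q_le in \<open>auto simp: indicator_def\<close>)
  qed (use measure_shift_region_fst(1)[OF P Q T borel] measure_shift_region_fst(1)[OF P P T borel] in auto)
  then show ?thesis
    using measure_shift_region_fst(2)[OF P Q T borel] measure_shift_region_fst(2)[OF P P T borel] by simp
qed

text \<open>Of the pairs with sum in t + \<Delta>, those with second coordinate below x and those in the
  rectangle (t - x + \<Delta>) \<times> [x, \<infinity>) together carry at most p; on the remaining ones the first
  coordinate is at most t - x, so the bound on Q applies.\<close>
lemma mDelta_convolution_le:
  assumes P: "distr_nonneg P" and Q: "distr_nonneg Q" and T: "0 < T" and x: "0 \<le> x"
    and P_near: "\<And>z. 0 \<le> z \<Longrightarrow> z \<le> x \<Longrightarrow> mDelta P T (t - z) \<le> p"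
    and Q_le: "\<And>u. x \<le> u \<Longrightarrow> u \<le> t \<Longrightarrow> mDelta Q T u \<le> B * mDelta P T u"
  shows "mDelta (P \<star> Q) T t
           \<le> p + B * measure (P \<Otimes>\<^sub>M P) {q. fst q + snd q \<in> shift_int t T \<and> fst q \<in> {..t - x}}"
proof -
  note p = distr_nonnegD[OF P] and q = distr_nonnegD[OF Q]
  interpret PQ: finite_measure "P \<Otimes>\<^sub>M Q" by (rule finite_measure_pair_measure[OF q(2) p(2)])
  interpret Q: finite_measure Q by (rule q(2))
  define S where "S = {q. fst q + snd q \<in> shift_int t T}"
  define R1 where "R1 = {q. fst q + snd q \<in> shift_int t T \<and> snd q \<in> {..<x}}"
  define R2 where "R2 = {q. fst q + snd q \<in> shift_int t T \<and> fst q \<in> {..t - x}}"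
  define R3 where "R3 = shift_int (t - x) T \<times> {x..}"
  note region = sum_region_in_sets[OF p(3) q(3) shift_int_in_borel[OF T]]
  have sets: "S \<in> sets (P \<Otimes>\<^sub>M Q)" "R1 \<in> sets (P \<Otimes>\<^sub>M Q)" "R2 \<in> sets (P \<Otimes>\<^sub>M Q)"
    "R3 \<in> sets (P \<Otimes>\<^sub>M Q)"
    using region[where X=UNIV and Y=UNIV] region[where X=UNIV and Y="{..<x}"]
      region[where X="{..t - x}" and Y=UNIV] p(3) q(3) T
    by (simp_all add: S_def R1_def R2_def R3_def pair_measureI)
  have "S \<subseteq> R1 \<union> R2 \<union> R3"
    using T by (auto simp: S_def R1_def R2_def R3_def shift_int_eq split: if_splits)
  then have "measure (P \<Otimes>\<^sub>M Q) S \<le> measure (P \<Otimes>\<^sub>M Q) R1 + measure (P \<Otimes>\<^sub>M Q) R2 + measure (P \<Otimes>\<^sub>M Q) R3"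
    using sets PQ.finite_measure_mono[of S "R1 \<union> R2 \<union> R3"]
      measure_Un_le[of "R1 \<union> R2" "P \<Otimes>\<^sub>M Q" R3] measure_Un_le[of R1 "P \<Otimes>\<^sub>M Q" R2]
    by auto
  moreover have "mDelta (P \<star> Q) T t = measure (P \<Otimes>\<^sub>M Q) S"
    unfolding S_def by (rule mDelta_convolution_eq_pair[OF P Q T])
  moreover have borel: "{..<x} \<in> sets borel" by simp
  have "measure (P \<Otimes>\<^sub>M Q) R1 \<le> p * measure Q {..<x}"
    unfolding R1_def measure_shift_region_snd[OF P Q T borel]
    using q(5) P_near q(3) measure_shift_region_fst(1)[OF Q P T borel]
    by (intro integral_indicator_mult_le[OF q(2)]) (auto elim: AE_mp)
  moreover have "measure (P \<Otimes>\<^sub>M Q) R3 \<le> p * measure Q {x..}"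
  proof -
    have "measure (P \<Otimes>\<^sub>M Q) R3 = mDelta P T (t - x) * measure Q {x..}"
      using p(3) q(3) T
      by (simp add: R3_def mDelta_def measure_def Q.emeasure_pair_measure_Times enn2real_mult)
    then show ?thesis
      using P_near[of x] x by (simp add: mult_right_mono)
  qed
  moreover have "p * measure Q {..<x} + p * measure Q {x..} = p"
  proof -
    have "{..<x} \<union> {x..} = space Q" "{..<x} \<inter> {x..} = {}" using q(4) by auto
    then have "measure Q {..<x} + measure Q {x..} = 1"
      using Q.finite_measure_Union[of "{..<x}" "{x..}"] q(1,3) by (simp add: prob_space.prob_space)
    then show ?thesis by (simp add: distrib_left[symmetric])
  qed
  moreover have "measure (P \<Otimes>\<^sub>M Q) R2
      \<le> B * measure (P \<Otimes>\<^sub>M P) {q. fst q + snd q \<in> shift_int t T \<and> fst q \<in> {..t - x}}"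
    unfolding R2_def by (rule measure_sum_region_fst_dominated[OF P Q T Q_le])
  ultimately show ?thesis by (simp add: algebra_simps)
qed

text \<open>The region misses the pairs with second coordinate below x, which already carry almost
  P(t + \<Delta>) of the mass (2 + \<delta>) P(t + \<Delta>).\<close>
lemma measure_sum_region_fst_le:
  assumes P: "distr_nonneg P" and T: "0 < T" and \<delta>: "0 < \<delta>" "\<delta> < 1"
    and conv: "mDelta (P \<star> P) T t \<le> (2 + \<delta>) * mDelta P T t"
    and near: "\<And>z. 0 \<le> z \<Longrightarrow> z < x \<Longrightarrow> (1 - \<delta>) * mDelta P T t \<le> mDelta P T (t - z)"
    and tail: "1 - \<delta> \<le> measure P {..<x}"
  shows "measure (P \<Otimes>\<^sub>M P) {q. fst q + snd q \<in> shift_int t T \<and> fst q \<in> {..t - x}}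
           \<le> (1 + 3 * \<delta>) * mDelta P T t"
proof -
  note p = distr_nonnegD[OF P]
  have borel: "{..<x} \<in> sets borel" "{..t - x} \<in> sets borel" by simp_all
  have "measure (P \<Otimes>\<^sub>M P) {q. fst q + snd q \<in> shift_int t T \<and> fst q \<in> {..t - x}}
      + measure (P \<Otimes>\<^sub>M P) {q. fst q + snd q \<in> shift_int t T \<and> snd q \<in> {..<x}}
      \<le> mDelta (P \<star> P) T t"
    by (intro measure_sum_regions_le_mDelta_convolution[OF P P T borel(2,1)])
      (auto dest!: less_of_mem_shift_int)
  moreover have "(1 - \<delta>) * mDelta P T t * measure P {..<x}
      \<le> measure (P \<Otimes>\<^sub>M P) {q. fst q + snd q \<in> shift_int t T \<and> snd q \<in> {..<x}}"
    unfolding measure_shift_region_snd[OF P P T borel(1)]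
    using p(5) near p(3) measure_shift_region_fst(1)[OF P P T borel(1)]
    by (intro integral_indicator_mult_ge[OF p(2)]) (auto elim: AE_mp)
  moreover have "(1 - \<delta>) * mDelta P T t * (1 - \<delta>) \<le> (1 - \<delta>) * mDelta P T t * measure P {..<x}"
    using tail \<delta> by (intro mult_left_mono) (auto simp: mDelta_nonneg)
  moreover have "0 \<le> \<delta> * \<delta> * mDelta P T t" by (simp add: mDelta_nonneg)
  ultimately show ?thesis
    using conv by (simp add: algebra_simps)
qed

lemma tendsto_at_right_0_ex_less:
  fixes f :: "real \<Rightarrow> real"
  assumes "(f \<longlongrightarrow> l) (at_right 0)" "l < c"
  shows "\<exists>\<delta>. 0 < \<delta> \<and> \<delta> < 1 \<and> f \<delta> < c"
proof -
  have "eventually (\<lambda>\<delta>. 0 < \<delta> \<and> \<delta> < 1 \<and> f \<delta> < c) (at_right 0)"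
    using eventually_at_right_less[of "0::real"] order_tendstoD(2)[OF tendsto_ident_at zero_less_one]
      order_tendstoD(2)[OF assms]
    by eventually_elim simp
  then show ?thesis
    using eventually_happens'[OF trivial_limit_at_right_real] by blast
qed

lemma asymp_equivI_sandwich:
  fixes h k :: "real \<Rightarrow> real"
  assumes pos: "eventually (\<lambda>t. 0 < k t) at_top"
    and lower: "\<And>e. 0 < e \<Longrightarrow> eventually (\<lambda>t. (1 - e) * k t \<le> h t) at_top"
    and upper: "\<And>e. 0 < e \<Longrightarrow> eventually (\<lambda>t. h t \<le> (1 + e) * k t) at_top"
  shows "h \<sim>[at_top] k"
proof (rule asymp_equivI')
  show "((\<lambda>t. h t / k t) \<longlongrightarrow> 1) at_top"
  proof (rule tendstoI)
    fix e :: real assume e: "0 < e"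
    then have e2: "0 < e / 2" by simp
    from pos lower[OF e2] upper[OF e2]
    show "eventually (\<lambda>t. dist (h t / k t) 1 < e) at_top"
    proof eventually_elim
      case (elim t)
      then have "1 - e / 2 \<le> h t / k t" "h t / k t \<le> 1 + e / 2"
        by (simp_all add: pos_le_divide_eq pos_divide_le_eq)
      then show ?case
        using e by (simp add: dist_real_def abs_less_iff)
    qed
  qed
qed

lemma asymp_equivD_upper:
  fixes h k :: "real \<Rightarrow> real"
  assumes "h \<sim>[at_top] k" "eventually (\<lambda>t. 0 < k t) at_top" "0 < e"
  shows "eventually (\<lambda>t. h t \<le> (1 + e) * k t) at_top"
proof -
  have "eventually (\<lambda>t. dist (if h t = 0 \<and> k t = 0 then 1 else h t / k t) 1 < e) at_top"
    using tendstoD[OF asymp_equivD[OF assms(1)] assms(3)] .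
  with assms(2) show ?thesis
  proof eventually_elim
    case (elim t)
    then have "h t / k t < 1 + e" by (simp add: dist_real_def abs_less_iff)
    then show ?case using elim(1) by (simp add: divide_less_eq)
  qed
qed

lemma ratio_close_bounds:
  fixes p q e :: real
  assumes "0 < e" "e < 1" "0 < p" "\<bar>q / p - 1\<bar> < e"
  shows "(1 - e) * p \<le> q" "(1 - e) * q \<le> p"
proof -
  have lo: "(1 - e) * p < q" and hi: "q < (1 + e) * p"
    using assms(3,4) by (auto simp: abs_less_iff field_simps)
  then show "(1 - e) * p \<le> q" by simp
  have "(1 - e) * q \<le> (1 - e) * ((1 + e) * p)"
    using hi assms(2) by (intro mult_left_mono) auto
  also have "\<dots> = p - e * e * p" by (simp add: algebra_simps)
  also have "\<dots> \<le> p" using assms by simp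
  finally show "(1 - e) * q \<le> p" .
qed

lemma long_tailed_chain:
  fixes f :: "real \<Rightarrow> real"
  assumes e: "0 < e" "e < 1" and nonneg: "\<And>x. 0 \<le> f x"
    and close: "\<forall>y\<ge>y0. f y > 0 \<and> (\<forall>s\<in>{0..1}. \<bar>f (y + s) / f y - 1\<bar> < e)"
  shows "y0 \<le> y \<Longrightarrow> 0 \<le> s \<Longrightarrow> s \<le> real n \<Longrightarrow>
    (1 - e) ^ n * f y \<le> f (y + s) \<and> (1 - e) ^ n * f (y + s) \<le> f y"
proof (induction n arbitrary: y s)
  case 0
  then show ?case by simp
next
  case (Suc n)
  have one_step: "(1 - e) * f y \<le> f (y + s) \<and> (1 - e) * f (y + s) \<le> f y"
    if "y0 \<le> y" "0 \<le> s" "s \<le> 1" for y s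
    using close that ratio_close_bounds[OF e] by auto
  have pow: "(1 - e) ^ Suc n \<le> 1 - e" "0 \<le> (1 - e) ^ n"
    using e by (auto intro: mult_left_le power_le_one)
  show ?case
  proof (cases "s \<le> 1")
    case True
    then show ?thesis
      using one_step[OF Suc.prems(1,2)] pow(1) nonneg[of y] nonneg[of "y + s"]
      by (meson mult_right_mono order_trans)
  next
    case False
    have IH: "(1 - e) ^ n * f (y + 1) \<le> f (y + s) \<and> (1 - e) ^ n * f (y + s) \<le> f (y + 1)"
      using Suc.IH[of "y + 1" "s - 1"] Suc.prems False by auto
    have step: "(1 - e) * f y \<le> f (y + 1)" "(1 - e) * f (y + 1) \<le> f y"
      using one_step[OF Suc.prems(1), of 1] by auto
    have "(1 - e) ^ Suc n * f y = (1 - e) ^ n * ((1 - e) * f y)" by simp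
    also have "\<dots> \<le> (1 - e) ^ n * f (y + 1)" using step(1) pow(2) by (intro mult_left_mono)
    finally have "(1 - e) ^ Suc n * f y \<le> f (y + s)" using IH by simp
    moreover have "(1 - e) ^ Suc n * f (y + s) \<le> (1 - e) * f (y + 1)"
      using IH e by (simp add: mult.assoc mult_left_mono)
    ultimately show ?thesis using step(2) by simp
  qed
qed

lemma long_tailed_uniform:
  fixes f :: "real \<Rightarrow> real"
  assumes nonneg: "\<And>x. 0 \<le> f x"
    and close: "\<And>e. 0 < e \<Longrightarrow>
      eventually (\<lambda>y. f y > 0 \<and> (\<forall>s\<in>{0..1}. \<bar>f (y + s) / f y - 1\<bar> < e)) at_top"
    and d: "0 < d" "d < 1" and M: "0 \<le> M"
  shows "eventually (\<lambda>t. f t > 0 \<and>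
           (\<forall>z\<in>{0..M}. (1 - d) * f t \<le> f (t - z) \<and> (1 - d) * f (t - z) \<le> f t)) at_top"
proof -
  define n where "n = nat \<lceil>M\<rceil>"
  have M_le_n: "M \<le> real n" unfolding n_def by linarith
  define e where "e = d / (real n + 1)"
  have e: "0 < e" "e < 1" using d unfolding e_def by (auto simp: field_simps)
  have "real n * e \<le> d"
    using d unfolding e_def by (simp add: field_simps)
  then have bernoulli: "1 - d \<le> (1 - e) ^ n"
    using Bernoulli_inequality[of "- e" n] e by simp
  obtain y0 where y0: "\<forall>y\<ge>y0. f y > 0 \<and> (\<forall>s\<in>{0..1}. \<bar>f (y + s) / f y - 1\<bar> < e)"
    using close[OF e(1)] by (auto simp: eventually_at_top_linorder)
  have "f t > 0 \<and> (\<forall>z\<in>{0..M}. (1 - d) * f t \<le> f (t - z) \<and> (1 - d) * f (t - z) \<le> f t)"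
    if t: "y0 + M \<le> t" for t
  proof (intro conjI ballI)
    show "f t > 0" using y0 M t by auto
    fix z assume z: "z \<in> {0..M}"
    have "(1 - e) ^ n * f (t - z) \<le> f t \<and> (1 - e) ^ n * f t \<le> f (t - z)"
      using long_tailed_chain[OF e nonneg y0, of "t - z" z n] t z M_le_n by auto
    then show "(1 - d) * f t \<le> f (t - z)" "(1 - d) * f (t - z) \<le> f t"
      using bernoulli nonneg[of t] nonneg[of "t - z"] by (meson mult_right_mono order_trans)+
  qed
  then show ?thesis by (auto simp: eventually_at_top_linorder)
qed

lemma bounded_of_recursive_bound:
  fixes r :: "real \<Rightarrow> real"
  assumes bdd: "\<And>t. bdd_above (r ` {x..t})" and nonneg: "\<And>u. x \<le> u \<Longrightarrow> 0 \<le> r u"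
    and t1: "x \<le> t1" and \<rho>: "\<rho> < 1"
    and step: "\<And>u B. t1 \<le> u \<Longrightarrow> 0 \<le> B \<Longrightarrow> (\<And>v. v \<in> {x..u} \<Longrightarrow> r v \<le> B) \<Longrightarrow> r u \<le> K + \<rho> * B"
  shows "\<exists>B. \<forall>t\<ge>t1. r t \<le> B"
proof -
  define R where "R t = Sup (r ` {x..t})" for t
  have R_ge: "r u \<le> R t" if "u \<in> {x..t}" for u t
    unfolding R_def using that bdd by (intro cSup_upper) auto
  have "R t \<le> max (R t1) (K / (1 - \<rho>))" if t: "t1 \<le> t" for t
  proof -
    have "0 \<le> R t" using R_ge[of x t] nonneg[of x] t t1 by simp
    then have "r u \<le> max (R t1) (K + \<rho> * R t)" if "u \<in> {x..t}" for u
      using that R_ge[of u t1] step[of u "R t"] R_ge[of _ t] by (cases "u \<le> t1") auto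
    then have R_le: "R t \<le> max (R t1) (K + \<rho> * R t)"
      unfolding R_def using t t1 by (intro cSup_least) auto
    show ?thesis
    proof (cases "R t \<le> R t1")
      case False
      with R_le have "R t * (1 - \<rho>) \<le> K" by (simp add: algebra_simps)
      then have "R t \<le> K / (1 - \<rho>)" using \<rho> by (simp add: pos_le_divide_eq)
      then show ?thesis by simp
    qed simp
  qed
  then show ?thesis
    using R_ge t1 by (meson atLeastAtMost_iff dual_order.trans order_refl)
qed

lemma summable_geometric_mult_bounded:
  fixes a :: real
  assumes "0 \<le> a" "a < 1" "\<And>n. 0 \<le> b n" "\<And>n. b n \<le> B"
  shows "summable (\<lambda>n. a ^ n * b n)"
proof (rule summable_comparison_test'[where g="\<lambda>n. B * a ^ n" and N=0])
  show "summable (\<lambda>n. B * a ^ n)" using assms by (intro summable_mult summable_geometric) auto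
  show "norm (a ^ n * b n) \<le> B * a ^ n" for n
    using assms mult_left_mono[of "b n" B "a ^ n"] by (simp add: mult.commute)
qed

lemma weighted_geometric_sums:
  fixes a :: real
  assumes "0 < a" "a < 1"
  shows "(\<lambda>n. (1 - a) * a ^ n * (real n + 1)) sums (1 / (1 - a))"
proof -
  have "(\<lambda>n. (1 - a) * (of_nat (Suc n) * a ^ n)) sums ((1 - a) * (1 / (1 - a)^2))"
    using assms by (intro sums_mult geometric_deriv_sums) auto
  moreover have "(1 - a) * (1 / (1 - a)^2) = 1 / (1 - a)"
    using assms by (simp add: power2_eq_square)
  ultimately show ?thesis by (simp add: algebra_simps)
qed

lemma weighted_geometric_partial_sum_gt:
  fixes a :: real
  assumes "0 < a" "a < 1" "0 < \<eta>"
  obtains N where "1 < N" "1 / (1 - a) - \<eta> < (\<Sum>n<N. (1 - a) * a ^ n * (real n + 1))"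
proof -
  have "eventually (\<lambda>N. 1 / (1 - a) - \<eta> < (\<Sum>n<N. (1 - a) * a ^ n * (real n + 1))) sequentially"
    using weighted_geometric_sums[OF assms(1,2)] assms(3) unfolding sums_def by (intro order_tendstoD(1)) auto
  then obtain N0 where "\<And>N. N0 \<le> N \<Longrightarrow> 1 / (1 - a) - \<eta> < (\<Sum>n<N. (1 - a) * a ^ n * (real n + 1))"
    unfolding eventually_sequentially by blast
  then show ?thesis using that[of "max N0 2"] by simp
qed

section \<open>The geometric compound of F\<close>

definition geometric_compound :: "real measure \<Rightarrow> real \<Rightarrow> real measure" where
  "geometric_compound F a = measure_pmf (geometric_pmf (1 - a)) \<bind> (\<lambda>n. conv_pow F (Suc n))"

lemma emeasure_geometric_compound:
  assumes F: "distr_nonneg F" and a: "0 < a" "a < 1" and B: "B \<in> sets borel"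
  shows "sets (geometric_compound F a) = sets borel"
    and "summable (\<lambda>n. (1 - a) * a ^ n * measure (conv_pow F (Suc n)) B)"
    and "emeasure (geometric_compound F a) B
           = ennreal (\<Sum>n. (1 - a) * a ^ n * measure (conv_pow F (Suc n)) B)"
proof -
  note d = distr_nonnegD[OF distr_nonneg_conv_pow[OF F]]
  have "conv_pow F (Suc n) \<in> space (subprob_algebra borel)" for n
    unfolding space_subprob_algebra using d(1)[of "Suc n"] d(3)[of "Suc n"]
    by (auto intro: prob_space_imp_subprob_space)
  then have meas: "(\<lambda>n. conv_pow F (Suc n))
      \<in> measurable (measure_pmf (geometric_pmf (1 - a))) (subprob_algebra borel)"
    by auto
  show "sets (geometric_compound F a) = sets borel"
    unfolding geometric_compound_def using d by (subst sets_bind) auto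
  show sm: "summable (\<lambda>n. (1 - a) * a ^ n * measure (conv_pow F (Suc n)) B)"
    using a summable_mult[OF summable_geometric_mult_bounded[where B=1], of a "\<lambda>n. measure (conv_pow F (Suc n)) B" "1 - a"]
    by (simp add: mult.assoc prob_space.prob_le_1[OF d(1)])
  have pmf: "pmf (geometric_pmf (1 - a)) n = (1 - a) * a ^ n" for n
    using a by (subst pmf_geometric) auto
  have "emeasure (geometric_compound F a) B
      = (\<integral>\<^sup>+n. emeasure (conv_pow F (Suc n)) B \<partial>measure_pmf (geometric_pmf (1 - a)))"
    unfolding geometric_compound_def by (rule emeasure_bind[OF _ meas B]) simp
  also have "\<dots> = (\<Sum>n. ennreal ((1 - a) * a ^ n * measure (conv_pow F (Suc n)) B))"
    unfolding nn_integral_measure_pmf nn_integral_count_space_nat pmf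
    using a d(2) by (simp add: finite_measure.emeasure_eq_measure ennreal_mult)
  also have "\<dots> = ennreal (\<Sum>n. (1 - a) * a ^ n * measure (conv_pow F (Suc n)) B)"
    using sm a by (intro suminf_ennreal2) auto
  finally show "emeasure (geometric_compound F a) B
      = ennreal (\<Sum>n. (1 - a) * a ^ n * measure (conv_pow F (Suc n)) B)" .
qed

lemma measure_geometric_compound:
  assumes F: "distr_nonneg F" and a: "0 < a" "a < 1" and B: "B \<in> sets borel"
  shows "measure (geometric_compound F a) B = (\<Sum>n. (1 - a) * a ^ n * measure (conv_pow F (Suc n)) B)"
proof -
  have "0 \<le> (\<Sum>n. (1 - a) * a ^ n * measure (conv_pow F (Suc n)) B)"
    using emeasure_geometric_compound(2)[OF assms] a by (intro suminf_nonneg) auto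
  then show ?thesis
    using emeasure_geometric_compound(3)[OF assms] by (simp add: measure_def)
qed

lemma distr_nonneg_geometric_compound:
  assumes F: "distr_nonneg F" and a: "0 < a" "a < 1"
  shows "distr_nonneg (geometric_compound F a)"
proof -
  note d = distr_nonnegD[OF distr_nonneg_conv_pow[OF F]]
  have sets: "sets (geometric_compound F a) = sets borel"
    using emeasure_geometric_compound(1)[OF F a, of UNIV] by simp
  have "(\<lambda>n. (1 - a) * a ^ n) sums ((1 - a) * (1 / (1 - a)))"
    using a by (intro sums_mult geometric_sums) auto
  then have "(\<Sum>n. (1 - a) * a ^ n) = 1" using a by (simp add: sums_iff)
  moreover have "measure (conv_pow F (Suc n)) UNIV = 1" for n
    using d by (metis prob_space.prob_space)
  ultimately have "emeasure (geometric_compound F a) (space (geometric_compound F a)) = 1"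
    using emeasure_geometric_compound(3)[OF F a, of UNIV] sets by (simp add: sets_eq_imp_space_eq)
  moreover have "measure (conv_pow F (Suc n)) {..<0} = 0" for n
    using distr_nonneg_conv_pow[OF F] by (simp add: distr_nonneg_def)
  then have "measure (geometric_compound F a) {..<0} = 0"
    using measure_geometric_compound[OF F a, of "{..<0}"] by simp
  ultimately show ?thesis
    using sets prob_spaceI by (auto simp: distr_nonneg_def)
qed

lemma mean_fun_eq_measure_geometric_compound:
  assumes F: "distr_nonneg F" and a: "0 < a" "a < 1"
  shows "mean_fun F a s = measure (geometric_compound F a) {s<..}"
proof -
  note d = distr_nonnegD[OF distr_nonneg_conv_pow[OF F]]
  have tail: "1 - measure (conv_pow F (Suc n)) {..s} = measure (conv_pow F (Suc n)) {s<..}" for n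
    using d(3)[of "Suc n"] d(4)[of "Suc n"] prob_space.prob_compl[OF d(1), of "{..s}" "Suc n"]
    by (simp add: Compl_eq_Diff_UNIV[symmetric] Compl_atMost)
  have "summable (\<lambda>n. a ^ n * measure (conv_pow F (Suc n)) {s<..})"
    using a by (intro summable_geometric_mult_bounded[where B=1]) (auto intro: prob_space.prob_le_1 d(1))
  then have "mean_fun F a s = (\<Sum>n. (1 - a) * a ^ n * measure (conv_pow F (Suc n)) {s<..})"
    unfolding mean_fun_def tail by (subst suminf_mult[symmetric]) (simp_all add: mult.assoc)
  then show ?thesis
    using measure_geometric_compound[OF F a, of "{s<..}"] by simp
qed

lemma mean_diff_eq_mDelta_geometric_compound:
  assumes F: "distr_nonneg F" and T: "0 < T" and a: "0 < a" "a < 1"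
  shows "mean_diff F a T t = mDelta (geometric_compound F a) T t"
proof (cases "T = \<infinity>")
  case True
  then show ?thesis
    by (simp add: mean_diff_def mDelta_def shift_int_def greaterThan_def
        mean_fun_eq_measure_geometric_compound[OF F a])
next
  case False
  then obtain r where r: "T = ereal r" "0 < r" using T by (cases T) auto
  have "shift_int t T = {t<..} - {t + r<..}"
    using r by (auto simp: shift_int_def)
  moreover have "finite_measure (geometric_compound F a)" "sets (geometric_compound F a) = sets borel"
    using distr_nonnegD[OF distr_nonneg_geometric_compound[OF F a]] by simp_all
  ultimately show ?thesis
    using False r by (simp add: mean_diff_def mDelta_def mean_fun_eq_measure_geometric_compound[OF F a]
        finite_measure.finite_measure_Diff)
qed

lemma geometric_compound_renewal:
  assumes F: "distr_nonneg F" and T: "0 < T" and a: "0 < a" "a < 1"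
  shows "mDelta (geometric_compound F a) T t
           = (1 - a) * mDelta F T t + a * mDelta (F \<star> geometric_compound F a) T t"
proof -
  define w where "w n = (1 - a) * a ^ n" for n
  define d where "d n s = mDelta (conv_pow F (Suc n)) T s" for n s
  have w: "0 \<le> w n" for n using a by (simp add: w_def)
  have d: "0 \<le> d n s" "d n s \<le> 1" for n s
    unfolding d_def using mDelta_le_1 distr_nonnegD(1)[OF distr_nonneg_conv_pow[OF F]]
    by (auto simp: mDelta_nonneg)
  have G: "mDelta (geometric_compound F a) T s = (\<Sum>n. w n * d n s)" for s
    unfolding mDelta_def d_def w_def using measure_geometric_compound[OF F a] T by simp
  have summable: "summable (\<lambda>n. w n * f n)" if "\<And>n. 0 \<le> f n" "\<And>n. f n \<le> 1" for f
    using summable_mult[OF summable_geometric_mult_bounded[where B=1, OF _ _ that], of a "1 - a"] a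
    by (simp add: w_def mult.assoc)
  have int_d: "(\<integral>x. d n (t - x) \<partial>F) = d (Suc n) t" for n
    unfolding d_def conv_pow.simps(2)[of F "Suc n"]
    by (rule mDelta_convolution(2)[OF F distr_nonneg_conv_pow[OF F] T, symmetric])
  have "mDelta (F \<star> geometric_compound F a) T t = (\<integral>x. (\<Sum>n. w n * d n (t - x)) \<partial>F)"
    using mDelta_convolution(2)[OF F distr_nonneg_geometric_compound[OF F a] T] G by simp
  also have "\<dots> = (\<Sum>n. (\<integral>x. w n * d n (t - x) \<partial>F))"
  proof (rule integral_suminf)
    show "integrable F (\<lambda>x. w n * d n (t - x))" for n
      unfolding d_def by (intro integrable_mult_right mDelta_convolution(1)[OF F distr_nonneg_conv_pow[OF F] T])
    show "AE x in F. summable (\<lambda>n. norm (w n * d n (t - x)))"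
      using summable d w by simp
    show "summable (\<lambda>n. \<integral>x. norm (w n * d n (t - x)) \<partial>F)"
      using summable d w int_d by simp
  qed
  also have "\<dots> = (\<Sum>n. w n * d (Suc n) t)"
    by (simp add: int_d)
  finally have conv: "mDelta (F \<star> geometric_compound F a) T t = (\<Sum>n. w n * d (Suc n) t)" .
  have "(\<Sum>n. w (Suc n) * d (Suc n) t) = (\<Sum>n. w n * d n t) - w 0 * d 0 t"
    by (rule suminf_split_head[OF summable]) (use d in auto)
  moreover have "(\<Sum>n. w (Suc n) * d (Suc n) t) = a * (\<Sum>n. w n * d (Suc n) t)"
    using suminf_mult[OF summable[of "\<lambda>n. d (Suc n) t"]] d by (simp add: w_def algebra_simps)
  moreover have "d 0 t = mDelta F T t"
    unfolding d_def by (rule mDelta_conv_pow_1[OF F T])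
  ultimately show ?thesis
    using G[of t] conv by (simp add: w_def)
qed

text \<open>The extra \<delta> in the summand n = 1 records an excess of F * F over 2 F.\<close>
lemma mDelta_geometric_compound_ge:
  assumes F: "distr_nonneg F" and T: "0 < T" and a: "0 < a" "a < 1"
    and \<eta>: "0 \<le> \<eta>" and N: "1 < N"
    and terms: "\<And>n. n < N \<Longrightarrow>
      (real n + 1 - \<eta> + (if n = 1 then \<delta> else 0)) * mDelta F T t \<le> mDelta (conv_pow F (Suc n)) T t"
  shows "((\<Sum>n<N. (1 - a) * a ^ n * (real n + 1)) - \<eta> + (1 - a) * a * \<delta>) * mDelta F T t
           \<le> mDelta (geometric_compound F a) T t"
proof -
  define w where "w n = (1 - a) * a ^ n" for n
  define f where "f = mDelta F T t"
  have w: "0 \<le> w n" for n using a by (simp add: w_def)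
  have d: "0 \<le> mDelta (conv_pow F (Suc n)) T t" "mDelta (conv_pow F (Suc n)) T t \<le> 1" for n
    using mDelta_le_1 distr_nonnegD(1)[OF distr_nonneg_conv_pow[OF F]] by (auto simp: mDelta_nonneg)
  have "(\<Sum>n<N. w n) = 1 - a ^ N"
    using a by (simp add: w_def sum_distrib_left[symmetric] sum_gp_strict)
  then have w_le_1: "(\<Sum>n<N. w n) \<le> 1" using a by simp
  have "(\<Sum>n<N. w n) * f \<le> f"
    using w_le_1 w mDelta_nonneg[of F T t] by (intro mult_left_le_one_le sum_nonneg) (auto simp: f_def)
  then have "(\<Sum>n<N. w n * (real n + 1)) * f - \<eta> * f + w 1 * \<delta> * f
      \<le> (\<Sum>n<N. w n * (real n + 1)) * f - \<eta> * (\<Sum>n<N. w n) * f + w 1 * \<delta> * f"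
    using \<eta> by (simp add: mult_left_mono mult.assoc)
  also have "\<dots> = (\<Sum>n<N. w n * (real n + 1) * f - \<eta> * w n * f + (if n = 1 then w 1 * \<delta> * f else 0))"
    using N by (simp add: sum.distrib sum_subtractf sum_distrib_left sum_distrib_right mult.assoc)
  also have "\<dots> = (\<Sum>n<N. w n * ((real n + 1 - \<eta> + (if n = 1 then \<delta> else 0)) * f))"
    by (intro sum.cong) (auto simp: algebra_simps)
  also have "\<dots> \<le> (\<Sum>n<N. w n * mDelta (conv_pow F (Suc n)) T t)"
    using terms w by (intro sum_mono mult_left_mono) (auto simp: f_def)
  also have "\<dots> \<le> (\<Sum>n. w n * mDelta (conv_pow F (Suc n)) T t)"
    using a d w by (intro sum_le_suminf summable_mult2) (auto simp: w_def mult.assoc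
        intro!: summable_mult summable_geometric_mult_bounded[where B=1])
  also have "\<dots> = mDelta (geometric_compound F a) T t"
    unfolding mDelta_def w_def using measure_geometric_compound[OF F a] T by simp
  finally show ?thesis by (simp add: f_def w_def algebra_simps)
qed

section \<open>Long-tailed distributions\<close>

locale long_tailed_distr =
  fixes F :: "real measure" and T :: ereal
  assumes distr_nonneg_F: "distr_nonneg F" and T_pos: "0 < T" and class_L_F: "class_L T F"
begin

lemma mDelta_eventually_close:
  "0 < e \<Longrightarrow> eventually (\<lambda>y. mDelta F T y > 0 \<and>
     (\<forall>s\<in>{0..1}. \<bar>mDelta F T (y + s) / mDelta F T y - 1\<bar> < e)) at_top"
  using class_L_F unfolding class_L_def by (intro eventually_conj) auto

lemma mDelta_eventually_pos: "eventually (\<lambda>t. mDelta F T t > 0) at_top"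
  using class_L_F unfolding class_L_def by blast

lemma mDelta_uniform:
  assumes "0 < d" "d < 1" "0 \<le> M"
  shows "eventually (\<lambda>t. mDelta F T t > 0 \<and> (\<forall>z\<in>{0..M}.
           (1 - d) * mDelta F T t \<le> mDelta F T (t - z) \<and> (1 - d) * mDelta F T (t - z) \<le> mDelta F T t)) at_top"
  by (rule long_tailed_uniform[OF mDelta_nonneg mDelta_eventually_close assms])

lemma mDelta_bounded_below:
  obtains y0 where "\<And>x t u. y0 \<le> x \<Longrightarrow> u \<in> {x..t} \<Longrightarrow> (1 / 2) ^ nat \<lceil>t - x\<rceil> * mDelta F T x \<le> mDelta F T u"
    and "\<And>u. y0 \<le> u \<Longrightarrow> 0 < mDelta F T u"
proof -
  obtain y0 where y0: "\<forall>y\<ge>y0. mDelta F T y > 0 \<and>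
      (\<forall>s\<in>{0..1}. \<bar>mDelta F T (y + s) / mDelta F T y - 1\<bar> < 1 / 2)"
    using mDelta_eventually_close[of "1 / 2"] by (auto simp: eventually_at_top_linorder)
  have "(1 / 2) ^ nat \<lceil>t - x\<rceil> * mDelta F T x \<le> mDelta F T u" if "y0 \<le> x" "u \<in> {x..t}" for x t u
    using long_tailed_chain[of "1 / 2" "mDelta F T" y0 x "u - x" "nat \<lceil>t - x\<rceil>"] y0 that
    by (auto simp: mDelta_nonneg) linarith
  moreover have "0 < mDelta F T u" if "y0 \<le> u" for u
    using y0 that by auto
  ultimately show ?thesis by (rule that)
qed

lemma measure_greaterThan_pos: "0 < measure F {x<..}"
proof -
  obtain y where y: "x \<le> y" "0 < mDelta F T y"
    using eventually_conj[OF eventually_ge_at_top[of x] mDelta_eventually_pos]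
    by (auto simp: eventually_at_top_linorder)
  have "mDelta F T y \<le> measure F {x<..}"
    unfolding mDelta_def using distr_nonnegD[OF distr_nonneg_F] T_pos y(1)
    by (intro finite_measure.finite_measure_mono) (auto dest: less_of_mem_shift_int)
  then show ?thesis using y(2) by simp
qed

lemma mDelta_convolution_eventually_ge:
  assumes Q: "distr_nonneg Q" and c: "0 \<le> c"
    and Q_ge: "\<And>c'. c' < c \<Longrightarrow> eventually (\<lambda>t. c' * mDelta F T t \<le> mDelta Q T t) at_top"
    and c': "c' < 1 + c"
  shows "eventually (\<lambda>t. c' * mDelta F T t \<le> mDelta (F \<star> Q) T t) at_top"
proof -
  have "((\<lambda>\<eta>. c' - (1 - \<eta>)\<^sup>2 * (1 + c - \<eta>)) \<longlongrightarrow> c' - (1 - 0)\<^sup>2 * (1 + c - 0)) (at_right 0)"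
    by (intro tendsto_intros)
  then have "\<exists>\<eta>. 0 < \<eta> \<and> \<eta> < 1 \<and> c' - (1 - \<eta>)\<^sup>2 * (1 + c - \<eta>) < 0"
    by (rule tendsto_at_right_0_ex_less) (use c' in simp)
  then obtain \<eta> where \<eta>: "0 < \<eta>" "\<eta> < 1" "c' < (1 - \<eta>)\<^sup>2 * (1 + c - \<eta>)"
    by auto
  define c1 where "c1 = max 0 (c - \<eta>)"
  have "eventually (\<lambda>t. c1 * mDelta F T t \<le> mDelta Q T t) at_top"
    using Q_ge[of "c - \<eta>"] \<eta>(1) by (cases "c - \<eta> \<le> 0") (auto simp: c1_def mDelta_nonneg)
  then obtain t1 where t1: "\<And>u. t1 \<le> u \<Longrightarrow> c1 * mDelta F T u \<le> mDelta Q T u"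
    by (auto simp: eventually_at_top_linorder)
  have "eventually (\<lambda>M. 0 \<le> M \<and> 1 - \<eta> \<le> measure F {..<M} \<and> 1 - \<eta> \<le> measure Q {..<M}) at_top"
    using distr_nonneg_eventually_measure_lessThan_ge[OF distr_nonneg_F \<eta>(1)]
      distr_nonneg_eventually_measure_lessThan_ge[OF Q \<eta>(1)]
    by (intro eventually_conj eventually_ge_at_top)
  then obtain M where M: "0 \<le> M" "1 - \<eta> \<le> measure F {..<M}" "1 - \<eta> \<le> measure Q {..<M}"
    by (auto simp: eventually_at_top_linorder)
  have "eventually (\<lambda>t. (\<forall>z\<in>{0..M}. (1 - \<eta>) * mDelta F T t \<le> mDelta F T (t - z))
      \<and> 2 * M \<le> t \<and> t1 + M \<le> t) at_top"
    using mDelta_uniform[OF \<eta>(1,2) M(1)]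
    by (intro eventually_conj eventually_ge_at_top) (auto elim: eventually_mono)
  then show ?thesis
  proof eventually_elim
    case (elim t)
    let ?p = "(1 - \<eta>) * mDelta F T t"
    have near: "?p \<le> mDelta F T (t - z)" "c1 * ?p \<le> mDelta Q T (t - z)" if "0 \<le> z" "z < M" for z
    proof -
      show "?p \<le> mDelta F T (t - z)" using elim that by auto
      then have "c1 * ?p \<le> c1 * mDelta F T (t - z)" by (simp add: c1_def mult_left_mono)
      also have "\<dots> \<le> mDelta Q T (t - z)" using t1 elim that by auto
      finally show "c1 * ?p \<le> mDelta Q T (t - z)" .
    qed
    have p: "0 \<le> ?p" using \<eta> mDelta_nonneg[of F T t] by simp
    have "c' * mDelta F T t \<le> (1 - \<eta>)\<^sup>2 * (1 + c - \<eta>) * mDelta F T t"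
      using \<eta>(3) by (intro mult_right_mono mDelta_nonneg) simp
    also have "\<dots> \<le> (1 - \<eta>)\<^sup>2 * (1 + c1) * mDelta F T t"
      by (intro mult_right_mono mult_left_mono mDelta_nonneg) (auto simp: c1_def)
    also have "\<dots> = ?p * (1 - \<eta>) + c1 * ?p * (1 - \<eta>)"
      by (simp add: power2_eq_square algebra_simps)
    also have "\<dots> \<le> ?p * measure Q {..<M} + c1 * ?p * measure F {..<M}"
      using M p by (intro add_mono mult_left_mono) (auto simp: c1_def)
    also have "\<dots> \<le> mDelta (F \<star> Q) T t"
      using near elim by (intro mDelta_convolution_ge[OF distr_nonneg_F Q T_pos]) auto
    finally show ?case .
  qed
qed

lemma mDelta_conv_pow_eventually_ge:
  "c < real k \<Longrightarrow> eventually (\<lambda>t. c * mDelta F T t \<le> mDelta (conv_pow F k) T t) at_top"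
proof (induction k arbitrary: c)
  case 0
  have zero: "mDelta (conv_pow F 0) T t = 0" if "0 \<le> t" for t
    using that T_pos less_of_mem_shift_int[of 0 t T]
    by (force simp: mDelta_def conv_pow.simps measure_return indicator_def)
  show ?case
    using eventually_ge_at_top[of 0]
  proof eventually_elim
    case (elim t)
    then show ?case
      using 0 zero[OF elim] mDelta_nonneg[of F T t] by (simp add: mult_nonpos_nonneg)
  qed
next
  case (Suc k)
  have "eventually (\<lambda>t. c * mDelta F T t \<le> mDelta (F \<star> conv_pow F k) T t) at_top"
    by (rule mDelta_convolution_eventually_ge[OF distr_nonneg_conv_pow[OF distr_nonneg_F]])
      (use Suc in auto)
  then show ?case by (simp add: conv_pow.simps)
qed

lemma mDelta_geometric_compound_eventually_ge:
  assumes a: "0 < a" "a < 1" and c: "c < 1 / (1 - a)"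
  shows "eventually (\<lambda>t. c * mDelta F T t \<le> mDelta (geometric_compound F a) T t) at_top"
proof -
  define \<eta> where "\<eta> = (1 / (1 - a) - c) / 2"
  have \<eta>: "0 < \<eta>" using c by (simp add: \<eta>_def)
  obtain N where N: "1 < N" "1 / (1 - a) - \<eta> < (\<Sum>n<N. (1 - a) * a ^ n * (real n + 1))"
    using weighted_geometric_partial_sum_gt[OF a \<eta>] .
  have "eventually (\<lambda>t. \<forall>n\<in>{..<N}. (real n + 1 - \<eta>) * mDelta F T t \<le> mDelta (conv_pow F (Suc n)) T t) at_top"
    using \<eta> by (intro eventually_ball_finite ballI mDelta_conv_pow_eventually_ge) auto
  then show ?thesis
  proof eventually_elim
    case (elim t)
    have "1 / (1 - a) - \<eta> - \<eta> = c" by (simp add: \<eta>_def field_simps)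
    then have "c \<le> (\<Sum>n<N. (1 - a) * a ^ n * (real n + 1)) - \<eta>"
      using N(2) by linarith
    then have "c * mDelta F T t \<le> ((\<Sum>n<N. (1 - a) * a ^ n * (real n + 1)) - \<eta>) * mDelta F T t"
      by (intro mult_right_mono mDelta_nonneg)
    also have "\<dots> \<le> mDelta (geometric_compound F a) T t"
      using mDelta_geometric_compound_ge[OF distr_nonneg_F T_pos a _ N(1), where \<delta>=0 and t=t] \<eta> elim by simp
    finally show ?case .
  qed
qed

text \<open>If F * F exceeded (2 + \<epsilon>) F at arbitrarily large t, the summand n = 1 of the mixture
  would push it a fixed multiple of F above F / (1 - a).\<close>
lemma convolution_eventually_le_of_asymp:
  assumes a: "0 < a" "a < 1"
    and asymp: "(\<lambda>t. mDelta (geometric_compound F a) T t) \<sim>[at_top] (\<lambda>t. mDelta F T t / (1 - a))"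
    and \<epsilon>: "0 < \<epsilon>"
  shows "eventually (\<lambda>t. mDelta (F \<star> F) T t \<le> (2 + \<epsilon>) * mDelta F T t) at_top"
proof (rule ccontr)
  assume not_le: "\<not> ?thesis"
  define \<eta> where "\<eta> = (1 - a) * a * \<epsilon> / 4"
  have \<eta>: "0 < \<eta>" using a \<epsilon> by (simp add: \<eta>_def)
  obtain N where N: "1 < N" "1 / (1 - a) - \<eta> < (\<Sum>n<N. (1 - a) * a ^ n * (real n + 1))"
    using weighted_geometric_partial_sum_gt[OF a \<eta>] .
  have pos: "eventually (\<lambda>t. 0 < mDelta F T t / (1 - a)) at_top"
    using mDelta_eventually_pos by eventually_elim (use a in simp)
  have "eventually (\<lambda>t. 0 < mDelta F T t
      \<and> mDelta (geometric_compound F a) T t \<le> (1 + (1 - a) * \<eta>) * (mDelta F T t / (1 - a))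
      \<and> (\<forall>n\<in>{..<N}. (real n + 1 - \<eta>) * mDelta F T t \<le> mDelta (conv_pow F (Suc n)) T t)) at_top"
    using mDelta_eventually_pos asymp_equivD_upper[OF asymp pos] a \<eta>
    by (intro eventually_conj eventually_ball_finite ballI mDelta_conv_pow_eventually_ge) auto
  from not_eventuallyD[OF not_eventually_impI[OF this not_le]]
  obtain t where pos_t: "0 < mDelta F T t"
    and upper: "mDelta (geometric_compound F a) T t \<le> (1 + (1 - a) * \<eta>) * (mDelta F T t / (1 - a))"
    and terms: "\<forall>n\<in>{..<N}. (real n + 1 - \<eta>) * mDelta F T t \<le> mDelta (conv_pow F (Suc n)) T t"
    and big: "(2 + \<epsilon>) * mDelta F T t < mDelta (F \<star> F) T t"
    by auto
  have "(real n + 1 - \<eta> + (if n = 1 then \<epsilon> else 0)) * mDelta F T t \<le> mDelta (conv_pow F (Suc n)) T t"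
    if "n < N" for n
  proof (cases "n = 1")
    case True
    have "(2 - \<eta> + \<epsilon>) * mDelta F T t \<le> (2 + \<epsilon>) * mDelta F T t"
      using \<eta> pos_t by (intro mult_right_mono) auto
    then show ?thesis
      using True big mDelta_conv_pow_2[OF distr_nonneg_F T_pos, of t] by (simp add: numeral_2_eq_2)
  qed (use terms that in auto)
  from mDelta_geometric_compound_ge[OF distr_nonneg_F T_pos a _ N(1) this] \<eta>
  have lower: "((\<Sum>n<N. (1 - a) * a ^ n * (real n + 1)) - \<eta> + 4 * \<eta>) * mDelta F T t
      \<le> mDelta (geometric_compound F a) T t"
    by (simp add: \<eta>_def)
  have "(1 + (1 - a) * \<eta>) * (mDelta F T t / (1 - a)) = (1 / (1 - a) + \<eta>) * mDelta F T t"
    using a by (simp add: field_simps)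
  also have "\<dots> < ((\<Sum>n<N. (1 - a) * a ^ n * (real n + 1)) - \<eta> + 4 * \<eta>) * mDelta F T t"
    using N(2) \<eta> pos_t by (intro mult_strict_right_mono) auto
  finally show False using lower upper by linarith
qed

lemma class_S_of_asymp:
  assumes a: "0 < a" "a < 1"
    and asymp: "(\<lambda>t. mDelta (geometric_compound F a) T t) \<sim>[at_top] (\<lambda>t. mDelta F T t / (1 - a))"
  shows "class_S T F"
  unfolding class_S_def
proof (intro conjI allI class_L_F measure_greaterThan_pos asymp_equivI_sandwich)
  show "eventually (\<lambda>t. 0 < 2 * mDelta F T t) at_top"
    using mDelta_eventually_pos by eventually_elim simp
  fix e :: real assume e: "0 < e"
  show "eventually (\<lambda>t. (1 - e) * (2 * mDelta F T t) \<le> mDelta (F \<star> F) T t) at_top"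
    using mDelta_conv_pow_eventually_ge[of "(1 - e) * 2" 2] e
    by (simp add: mDelta_conv_pow_2[OF distr_nonneg_F T_pos] algebra_simps)
  show "eventually (\<lambda>t. mDelta (F \<star> F) T t \<le> (1 + e) * (2 * mDelta F T t)) at_top"
    using convolution_eventually_le_of_asymp[OF a asymp, of "2 * e"] e by (simp add: algebra_simps)
qed

lemma class_S_eventually_le:
  assumes "class_S T F" "0 < \<delta>"
  shows "eventually (\<lambda>t. mDelta (F \<star> F) T t \<le> (2 + \<delta>) * mDelta F T t) at_top"
proof -
  have "eventually (\<lambda>t. 0 < 2 * mDelta F T t) at_top"
    using mDelta_eventually_pos by eventually_elim simp
  then have "eventually (\<lambda>t. mDelta (F \<star> F) T t \<le> (1 + \<delta> / 2) * (2 * mDelta F T t)) at_top"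
    using assms by (intro asymp_equivD_upper) (auto simp: class_S_def)
  then show ?thesis by (simp add: algebra_simps)
qed

lemma mDelta_geometric_compound_le:
  assumes a: "0 < a" "a < 1" and \<delta>: "0 < \<delta>" "\<delta> < 1" and x: "0 \<le> x" and B: "0 \<le> B"
    and tail: "1 - \<delta> \<le> measure F {..<x}"
    and near: "\<forall>z\<in>{0..x}. (1 - \<delta>) * mDelta F T t \<le> mDelta F T (t - z) \<and> (1 - \<delta>) * mDelta F T (t - z) \<le> mDelta F T t"
    and conv: "mDelta (F \<star> F) T t \<le> (2 + \<delta>) * mDelta F T t"
    and G_le: "\<And>u. x \<le> u \<Longrightarrow> u \<le> t \<Longrightarrow> mDelta (geometric_compound F a) T u \<le> B * mDelta F T u"
  shows "mDelta (geometric_compound F a) T t \<le> ((1 - a) + a / (1 - \<delta>) + a * B * (1 + 3 * \<delta>)) * mDelta F T t"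
proof -
  let ?G = "geometric_compound F a" and ?f = "mDelta F T t"
  have "mDelta (F \<star> ?G) T t
      \<le> ?f / (1 - \<delta>) + B * measure (F \<Otimes>\<^sub>M F) {q. fst q + snd q \<in> shift_int t T \<and> fst q \<in> {..t - x}}"
    using near \<delta> G_le
    by (intro mDelta_convolution_le[OF distr_nonneg_F distr_nonneg_geometric_compound[OF distr_nonneg_F a] T_pos x])
      (auto simp: pos_le_divide_eq mult.commute)
  also have "\<dots> \<le> ?f / (1 - \<delta>) + B * ((1 + 3 * \<delta>) * ?f)"
    using near conv tail B
    by (intro add_left_mono mult_left_mono measure_sum_region_fst_le[OF distr_nonneg_F T_pos \<delta>]) auto
  finally have "a * mDelta (F \<star> ?G) T t \<le> a * (?f / (1 - \<delta>) + B * ((1 + 3 * \<delta>) * ?f))"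
    using a by (simp add: mult_left_mono)
  then show ?thesis
    using geometric_compound_renewal[OF distr_nonneg_F T_pos a, of t] by (simp add: algebra_simps)
qed

lemma geometric_compound_recursive_bound:
  assumes S: "class_S T F" and a: "0 < a" "a < 1" and \<delta>: "0 < \<delta>" "\<delta> < 1"
  obtains x where "x0 \<le> x"
    "eventually (\<lambda>t. \<forall>B\<ge>0. (\<forall>u\<in>{x..t}. mDelta (geometric_compound F a) T u \<le> B * mDelta F T u) \<longrightarrow>
       mDelta (geometric_compound F a) T t \<le> ((1 - a) + a / (1 - \<delta>) + a * B * (1 + 3 * \<delta>)) * mDelta F T t) at_top"
proof -
  have "eventually (\<lambda>x. 1 - \<delta> \<le> measure F {..<x} \<and> x0 \<le> x \<and> 0 \<le> x) at_top"
    using distr_nonneg_eventually_measure_lessThan_ge[OF distr_nonneg_F \<delta>(1)]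
    by (intro eventually_conj eventually_ge_at_top)
  then obtain x where x: "1 - \<delta> \<le> measure F {..<x}" "x0 \<le> x" "0 \<le> x"
    by (auto simp: eventually_at_top_linorder)
  have "eventually (\<lambda>t. (mDelta F T t > 0 \<and> (\<forall>z\<in>{0..x}. (1 - \<delta>) * mDelta F T t \<le> mDelta F T (t - z)
      \<and> (1 - \<delta>) * mDelta F T (t - z) \<le> mDelta F T t))
      \<and> mDelta (F \<star> F) T t \<le> (2 + \<delta>) * mDelta F T t) at_top"
    using mDelta_uniform[OF \<delta> x(3)] class_S_eventually_le[OF S \<delta>(1)] by (rule eventually_conj)
  then have "eventually (\<lambda>t. \<forall>B\<ge>0. (\<forall>u\<in>{x..t}. mDelta (geometric_compound F a) T u \<le> B * mDelta F T u) \<longrightarrow>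
       mDelta (geometric_compound F a) T t \<le> ((1 - a) + a / (1 - \<delta>) + a * B * (1 + 3 * \<delta>)) * mDelta F T t) at_top"
    by eventually_elim (use x in \<open>auto intro!: mDelta_geometric_compound_le[OF a \<delta>]\<close>)
  with x(2) that show ?thesis by blast
qed

lemma geometric_compound_eventually_bounded:
  assumes S: "class_S T F" and a: "0 < a" "a < 1"
  shows "\<exists>B\<ge>0. eventually (\<lambda>t. mDelta (geometric_compound F a) T t \<le> B * mDelta F T t) at_top"
proof -
  let ?G = "geometric_compound F a" and ?f = "mDelta F T"
  have "((\<lambda>\<delta>. a * (1 + 3 * \<delta>)) \<longlongrightarrow> a * (1 + 3 * 0)) (at_right 0)"
    by (intro tendsto_intros)
  then have "\<exists>\<delta>. 0 < \<delta> \<and> \<delta> < 1 \<and> a * (1 + 3 * \<delta>) < 1"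
    by (rule tendsto_at_right_0_ex_less) (use a in simp)
  then obtain \<delta> where \<delta>: "0 < \<delta>" "\<delta> < 1" "a * (1 + 3 * \<delta>) < 1"
    by blast
  obtain y0 where low: "\<And>x t u. y0 \<le> x \<Longrightarrow> u \<in> {x..t} \<Longrightarrow> (1 / 2) ^ nat \<lceil>t - x\<rceil> * ?f x \<le> ?f u"
    and pos: "\<And>u. y0 \<le> u \<Longrightarrow> 0 < ?f u"
    by (rule mDelta_bounded_below) blast+
  obtain x where x: "y0 \<le> x"
    and rec: "eventually (\<lambda>t. \<forall>B\<ge>0. (\<forall>u\<in>{x..t}. mDelta ?G T u \<le> B * ?f u) \<longrightarrow>
       mDelta ?G T t \<le> ((1 - a) + a / (1 - \<delta>) + a * B * (1 + 3 * \<delta>)) * ?f t) at_top"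
      (is "eventually ?rec at_top")
    using geometric_compound_recursive_bound[OF S a \<delta>(1,2)] .
  obtain N where N: "\<And>t. N \<le> t \<Longrightarrow> ?rec t"
    using rec by (auto simp: eventually_at_top_linorder)
  define t1 where "t1 = max x N"
  have t1: "x \<le> t1" "\<And>t. t1 \<le> t \<Longrightarrow> ?rec t"
    using N by (auto simp: t1_def)
  define r where "r u = mDelta ?G T u / ?f u" for u
  have "\<exists>B. \<forall>t\<ge>t1. r t \<le> B"
  proof (rule bounded_of_recursive_bound[OF _ _ t1(1) \<delta>(3)])
    show "bdd_above (r ` {x..t})" for t
    proof (rule bdd_aboveI2)
      fix u assume u: "u \<in> {x..t}"
      have "0 < (1 / 2) ^ nat \<lceil>t - x\<rceil> * ?f x" using pos x by simp
      then show "r u \<le> 1 / ((1 / 2) ^ nat \<lceil>t - x\<rceil> * ?f x)"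
        using low[OF x u] mDelta_le_1[OF distr_nonnegD(1)[OF distr_nonneg_geometric_compound[OF distr_nonneg_F a]]]
        unfolding r_def by (intro frac_le) auto
    qed
    show "0 \<le> r u" for u by (simp add: r_def mDelta_nonneg)
    fix u B assume u: "t1 \<le> u" and B: "0 \<le> B" and r_le: "\<And>v. v \<in> {x..u} \<Longrightarrow> r v \<le> B"
    have "\<forall>v\<in>{x..u}. mDelta ?G T v \<le> B * ?f v"
      using r_le pos x by (auto simp: r_def pos_divide_le_eq)
    then have "mDelta ?G T u \<le> ((1 - a) + a / (1 - \<delta>) + a * B * (1 + 3 * \<delta>)) * ?f u"
      using t1(2)[OF u] B by blast
    then show "r u \<le> (1 - a) + a / (1 - \<delta>) + a * (1 + 3 * \<delta>) * B"
      using pos[of u] u t1(1) x by (simp add: r_def pos_divide_le_eq mult_ac)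
  qed
  then obtain B where B: "\<And>t. t1 \<le> t \<Longrightarrow> r t \<le> B" by blast
  have "mDelta ?G T t \<le> max B 0 * ?f t" if t: "t1 \<le> t" for t
  proof -
    have "mDelta ?G T t \<le> B * ?f t"
      using B[OF t] pos[of t] t t1(1) x by (simp add: r_def pos_divide_le_eq)
    also have "\<dots> \<le> max B 0 * ?f t" by (intro mult_right_mono mDelta_nonneg) simp
    finally show ?thesis .
  qed
  then show ?thesis
    by (intro exI[of _ "max B 0"]) (auto simp: eventually_at_top_linorder)
qed

lemma geometric_compound_bound_improve:
  assumes S: "class_S T F" and a: "0 < a" "a < 1" and B: "0 \<le> B" and \<eta>: "0 < \<eta>"
    and bound: "eventually (\<lambda>t. mDelta (geometric_compound F a) T t \<le> B * mDelta F T t) at_top"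
  shows "eventually (\<lambda>t. mDelta (geometric_compound F a) T t \<le> (1 + \<eta> + a * B) * mDelta F T t) at_top"
proof -
  let ?K = "\<lambda>\<delta>. (1 - a) + a / (1 - \<delta>) + a * B * (1 + 3 * \<delta>)"
  have "(?K \<longlongrightarrow> (1 - a) + a / (1 - 0) + a * B * (1 + 3 * 0)) (at_right 0)"
    by (intro tendsto_intros) auto
  then have "\<exists>\<delta>. 0 < \<delta> \<and> \<delta> < 1 \<and> ?K \<delta> < 1 + \<eta> + a * B"
    by (rule tendsto_at_right_0_ex_less) (use \<eta> in simp)
  then obtain \<delta> where \<delta>: "0 < \<delta>" "\<delta> < 1" "?K \<delta> < 1 + \<eta> + a * B"
    by blast
  obtain u0 where u0: "\<And>u. u0 \<le> u \<Longrightarrow> mDelta (geometric_compound F a) T u \<le> B * mDelta F T u"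
    using bound by (auto simp: eventually_at_top_linorder)
  obtain x where x: "u0 \<le> x"
    and rec: "eventually (\<lambda>t. \<forall>B\<ge>0. (\<forall>u\<in>{x..t}. mDelta (geometric_compound F a) T u \<le> B * mDelta F T u) \<longrightarrow>
       mDelta (geometric_compound F a) T t
         \<le> ((1 - a) + a / (1 - \<delta>) + a * B * (1 + 3 * \<delta>)) * mDelta F T t) at_top"
    using geometric_compound_recursive_bound[OF S a \<delta>(1,2)] .
  from rec show ?thesis
  proof eventually_elim
    case (elim t)
    have "mDelta (geometric_compound F a) T t \<le> ?K \<delta> * mDelta F T t"
      using elim B u0 x by auto
    also have "\<dots> \<le> (1 + \<eta> + a * B) * mDelta F T t"
      using \<delta>(3) by (intro mult_right_mono mDelta_nonneg) simp
    finally show ?case .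
  qed
qed

text \<open>Iterating B \<mapsto> 1 + \<eta> + a B from the initial bound approaches its fixed point
  (1 + \<eta>) / (1 - a).\<close>
lemma geometric_compound_eventually_le:
  assumes S: "class_S T F" and a: "0 < a" "a < 1" and e: "0 < e"
  shows "eventually (\<lambda>t. mDelta (geometric_compound F a) T t \<le> (1 + e) * (mDelta F T t / (1 - a))) at_top"
proof -
  obtain B0 where B0: "0 \<le> B0" "eventually (\<lambda>t. mDelta (geometric_compound F a) T t \<le> B0 * mDelta F T t) at_top"
    using geometric_compound_eventually_bounded[OF S a] by blast
  define \<eta> where "\<eta> = (1 - a) * e / 2"
  define C where "C = (1 + \<eta>) / (1 - a)"
  have \<eta>: "0 < \<eta>" using a e by (simp add: \<eta>_def)
  have C: "0 \<le> C" "1 + \<eta> + a * C = C" "C = 1 / (1 - a) + e / 2"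
    using a \<eta> by (simp_all add: C_def \<eta>_def field_simps)
  have iterate: "eventually (\<lambda>t. mDelta (geometric_compound F a) T t \<le> (C + a ^ k * B0) * mDelta F T t) at_top" for k
  proof (induction k)
    case 0
    from B0(2) show ?case
    proof eventually_elim
      case (elim t)
      have "B0 * mDelta F T t \<le> (C + B0) * mDelta F T t"
        using C(1) by (intro mult_right_mono mDelta_nonneg) simp
      with elim show ?case by simp
    qed
  next
    case (Suc k)
    have "0 \<le> C + a ^ k * B0" using C(1) B0(1) a by simp
    moreover have "1 + \<eta> + a * (C + a ^ k * B0) = C + a ^ Suc k * B0"
      using C(2) by (simp add: algebra_simps)
    ultimately show ?case
      using geometric_compound_bound_improve[OF S a _ \<eta> Suc.IH] by simp
  qed
  have "(\<lambda>k. a ^ k * B0) \<longlonglongrightarrow> 0 * B0"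
    using a by (intro tendsto_mult LIMSEQ_power_zero tendsto_const) simp
  then have "eventually (\<lambda>k. a ^ k * B0 < e / 2) sequentially"
    using e by (intro order_tendstoD(2)) auto
  then obtain k where k: "a ^ k * B0 < e / 2"
    by (auto simp: eventually_sequentially)
  have "C + a ^ k * B0 \<le> 1 / (1 - a) + e" using C(3) k by simp
  also have "\<dots> \<le> (1 + e) / (1 - a)"
    using a e by (simp add: field_simps)
  finally have "C + a ^ k * B0 \<le> (1 + e) / (1 - a)" .
  then have "(C + a ^ k * B0) * mDelta F T t \<le> (1 + e) / (1 - a) * mDelta F T t" for t
    by (intro mult_right_mono mDelta_nonneg)
  then have le: "(C + a ^ k * B0) * mDelta F T t \<le> (1 + e) * (mDelta F T t / (1 - a))" for t
    by simp
  from iterate[of k] show ?thesis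
  proof eventually_elim
    case (elim t)
    with le[of t] show ?case by linarith
  qed
qed

lemma geometric_compound_asymp:
  assumes S: "class_S T F" and a: "0 < a" "a < 1"
  shows "(\<lambda>t. mDelta (geometric_compound F a) T t) \<sim>[at_top] (\<lambda>t. mDelta F T t / (1 - a))"
proof (rule asymp_equivI_sandwich)
  show "eventually (\<lambda>t. 0 < mDelta F T t / (1 - a)) at_top"
    using mDelta_eventually_pos by eventually_elim (use a in simp)
  fix e :: real assume e: "0 < e"
  have "(1 - e) / (1 - a) < 1 / (1 - a)" using a e by (simp add: divide_strict_right_mono)
  from mDelta_geometric_compound_eventually_ge[OF a this]
  show "eventually (\<lambda>t. (1 - e) * (mDelta F T t / (1 - a)) \<le> mDelta (geometric_compound F a) T t) at_top"
    by eventually_elim simp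
  show "eventually (\<lambda>t. mDelta (geometric_compound F a) T t \<le> (1 + e) * (mDelta F T t / (1 - a))) at_top"
    by (rule geometric_compound_eventually_le[OF S a e])
qed

end

theorem theorem8:
  fixes F :: "real measure" and a :: real and T :: ereal
  assumes "distr_nonneg F"
    and "0 < a" and "a < 1"
    and "0 < T"
    and "class_L T F"
  shows "class_S T F \<longleftrightarrow>
         ((\<lambda>t. mean_diff F a T t) \<sim>[at_top] (\<lambda>t. mDelta F T t / (1 - a)))"
proof -
  interpret long_tailed_distr F T
    using assms(1,4,5) by unfold_locales
  have "(\<lambda>t. mean_diff F a T t) = (\<lambda>t. mDelta (geometric_compound F a) T t)"
    using mean_diff_eq_mDelta_geometric_compound[OF assms(1,4,2,3)] by simp
  then show ?thesis
    using geometric_compound_asymp[OF _ assms(2,3)] class_S_of_asymp[OF assms(2,3)] by auto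
qed

end
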